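(* Let $K$ be an algebraically closed field, let $k\geq0$ be an integer, let $Q$ be the cyclic quiver with vertices $0,1,\dots,k$ and arrows $a_i:i\to i+1$ for $i<k$ and $a_k:k\to0$, and let $M_{\omega_1}$ be the $KQ$-module defined in the context. Then $\mathrm{Ext}^1_{KQ}\big(M_{\omega_1},\bigoplus_{\omega_1}KQ\big)\neq0$, where $\bigoplus_{\omega_1}KQ$ is the direct sum of $\omega_1$ copies of $KQ$.
   Context: Paths in a quiver are composable sequences of arrows written left to right, with trivial paths $e_v$; the path algebra $KQ$ has basis all paths, product = concatenation when the target of the first equals the source of the second, else $0$. Modules are right modules. $\omega_1$ is the first uncountable ordinal, $\mathrm{Lim}$ the class of nonzero limit ordinals. Fix a ladder system: for each $\alpha\in\omega_1\cap\mathrm{Lim}$ a set $C_\alpha=\{\zeta^\alpha_n:n\in\omega\}$, strictly increasingly enumerated and cofinal in $\alpha$, such that each $\zeta^\alpha_n$ equals $\delta+n+1$ for some $\delta\in\alpha\cap(\{0\}\cup\mathrm{Lim})$. For $\xi<\omega_1$ let $F^\xi=KQ$ if $\xi\notin\mathrm{Lim}$ and $F^\xi=\bigoplus_{n\in\omega}KQ$ if $\xi\in\mathrm{Lim}$; let $F=\bigoplus_{\xi<\omega_1}F^\xi$ (finite-support functions, coordinatewise operations). For $\gamma\in\omega_1\setminus\mathrm{Lim}$, $e^\gamma_0\in F$ has support $\{\gamma\}$ and value $e_0$ there; for $\alpha\in\mathrm{Lim}$ and $n\in\omega$, $e^{\alpha,n}_0\in F$ has support $\{\alpha\}$ and value at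 $\alpha$ the element of $\bigoplus_{m}KQ$ with support $\{n\}$ and value $e_0$. Let $G_\alpha$ be the $KQ$-submodule of $F$ generated by $\{e^{\zeta^\alpha_n}_0-e^{\alpha,n}_0+e^{\alpha,n+1}_0a_0a_1\cdots a_k:n\in\omega\}$, let $I=\sum_{\alpha\in\omega_1\cap\mathrm{Lim}}G_\alpha$, and let $M_{\omega_1}$ be the $KQ$-submodule of $F/I$ generated by $\{e^\gamma_0+I:\gamma\in\omega_1\setminus\mathrm{Lim}\}\cup\{e^{\alpha,n}_0+I:\alpha\in\omega_1\cap\mathrm{Lim},n\in\omega\}$. *)

theory Defs
  imports "HOL-Algebra.Ring" "HOL-Library.Countable_Set" "HOL-Library.Function_Algebras" "HOL-Computational_Algebra.Polynomial"
begin

definition alg_closed :: "'a::field itself \<Rightarrow> bool" where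
  "alg_closed _ \<longleftrightarrow> (\<forall>p::'a poly. degree p > 0 \<longrightarrow> (\<exists>x. poly p x = 0))"

record ('r, 'm) rmod =
  mcarrier :: "'m set"
  madd :: "'m \<Rightarrow> 'm \<Rightarrow> 'm"
  mzero :: 'm
  mact :: "'m \<Rightarrow> 'r \<Rightarrow> 'm"   (* right action: mact m r = m . r *)

definition right_module :: "'r ring \<Rightarrow> ('r, 'm) rmod \<Rightarrow> bool" where
  "right_module R M \<longleftrightarrow>
     mzero M \<in> mcarrier M
   \<and> (\<forall>x\<in>mcarrier M. \<forall>y\<in>mcarrier M. madd M x y \<in> mcarrier M)
   \<and> (\<forall>x\<in>mcarrier M. \<forall>y\<in>mcarrier M. \<forall>z\<in>mcarrier M. madd M (madd M x y) z = madd M x (madd M y z))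
   \<and> (\<forall>x\<in>mcarrier M. \<forall>y\<in>mcarrier M. madd M x y = madd M y x)
   \<and> (\<forall>x\<in>mcarrier M. madd M (mzero M) x = x)
   \<and> (\<forall>x\<in>mcarrier M. \<exists>y\<in>mcarrier M. madd M x y = mzero M)
   \<and> (\<forall>x\<in>mcarrier M. \<forall>r\<in>carrier R. mact M x r \<in> mcarrier M)
   \<and> (\<forall>x\<in>mcarrier M. \<forall>r\<in>carrier R. \<forall>s\<in>carrier R. mact M x (r \<oplus>\<^bsub>R\<^esub> s) = madd M (mact M x r) (mact M x s))
   \<and> (\<forall>x\<in>mcarrier M. \<forall>y\<in>mcarrier M. \<forall>r\<in>carrier R. mact M (madd M x y) r = madd M (mact M x r) (mact M y r))
   \<and> (\<forall>x\<in>mcarrier M. \<forall>r\<in>carrier R. \<forall>s\<in>carrier R. mact M x (r \<otimes>\<^bsub>R\<^esub> s) = mact M (mact M x r) s)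
   \<and> (\<forall>x\<in>mcarrier M. mact M x \<one>\<^bsub>R\<^esub> = x)"

definition rmod_hom :: "'r ring \<Rightarrow> ('r, 'm) rmod \<Rightarrow> ('r, 'n) rmod \<Rightarrow> ('m \<Rightarrow> 'n) \<Rightarrow> bool" where
  "rmod_hom R M N f \<longleftrightarrow>
     f \<in> mcarrier M \<rightarrow> mcarrier N
   \<and> (\<forall>x\<in>mcarrier M. \<forall>y\<in>mcarrier M. f (madd M x y) = madd N (f x) (f y))
   \<and> (\<forall>x\<in>mcarrier M. \<forall>r\<in>carrier R. f (mact M x r) = mact N (f x) r)"

text \<open>Ext^1_R(M,N) is nonzero (Yoneda description): there is a short exact sequence
  0 -> N -> E -> M -> 0 of right R-modules which does not split.  Every extension is
  isomorphic to one whose underlying set is (in bijection with) N x M, so the middle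
  term may be taken on the type 'n x 'm without loss of generality.\<close>

definition Ext1_nonzero :: "'r ring \<Rightarrow> ('r, 'm) rmod \<Rightarrow> ('r, 'n) rmod \<Rightarrow> bool" where
  "Ext1_nonzero R M N \<longleftrightarrow>
     (\<exists>(E :: ('r, 'n \<times> 'm) rmod) f g.
        right_module R E
      \<and> rmod_hom R N E f \<and> inj_on f (mcarrier N)
      \<and> rmod_hom R E M g \<and> g ` mcarrier E = mcarrier M
      \<and> f ` mcarrier N = {e \<in> mcarrier E. g e = mzero M}
      \<and> \<not> (\<exists>s. rmod_hom R M E s \<and> (\<forall>x\<in>mcarrier M. g (s x) = x)))"

inductive_set gen_submod :: "'r ring \<Rightarrow> ('r, 'm) rmod \<Rightarrow> 'm set \<Rightarrow> 'm set"
  for R M X where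
  gen_base: "x \<in> X \<Longrightarrow> x \<in> gen_submod R M X"
| gen_zero: "mzero M \<in> gen_submod R M X"
| gen_add: "x \<in> gen_submod R M X \<Longrightarrow> y \<in> gen_submod R M X \<Longrightarrow> madd M x y \<in> gen_submod R M X"
| gen_act: "x \<in> gen_submod R M X \<Longrightarrow> r \<in> carrier R \<Longrightarrow> mact M x r \<in> gen_submod R M X"

definition sub_rmod :: "('r, 'm) rmod \<Rightarrow> 'm set \<Rightarrow> ('r, 'm) rmod" where
  "sub_rmod M S = \<lparr>mcarrier = S, madd = madd M, mzero = mzero M, mact = mact M\<rparr>"

definition rcoset :: "('r, 'm) rmod \<Rightarrow> 'm set \<Rightarrow> 'm \<Rightarrow> 'm set" where
  "rcoset M S x = {madd M x s | s. s \<in> S}"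

definition quot_rmod :: "('r, 'm) rmod \<Rightarrow> 'm set \<Rightarrow> ('r, 'm set) rmod" where
  "quot_rmod M S =
    \<lparr>mcarrier = {rcoset M S x | x. x \<in> mcarrier M},
     madd = (\<lambda>A B. rcoset M S (madd M (SOME a. a \<in> A) (SOME b. b \<in> B))),
     mzero = rcoset M S (mzero M),
     mact = (\<lambda>A r. rcoset M S (mact M (SOME a. a \<in> A) r))\<rparr>"

definition dsum :: "'r ring \<Rightarrow> 'j set \<Rightarrow> ('r, 'j \<Rightarrow> 'r) rmod" where
  "dsum R J =
    \<lparr>mcarrier = {f. (\<forall>j. f j \<in> carrier R) \<and> (\<forall>j. j \<notin> J \<longrightarrow> f j = \<zero>\<^bsub>R\<^esub>)
                    \<and> finite {j. f j \<noteq> \<zero>\<^bsub>R\<^esub>}},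
     madd = (\<lambda>f g j. f j \<oplus>\<^bsub>R\<^esub> g j),
     mzero = (\<lambda>j. \<zero>\<^bsub>R\<^esub>),
     mact = (\<lambda>f r j. f j \<otimes>\<^bsub>R\<^esub> r)\<rparr>"

text \<open>Vertices 0..k, arrows a_i : i -> i+1 (i<k), a_k : k -> 0.  A path is determined by
  its source vertex v (v <= k) and its length l: it is the path a_v a_(v+1) ... (indices mod k+1);
  the trivial path e_v is (v,0) and its target is (v+l) mod (k+1).  Elements of KQ are finitely
  supported K-valued functions on paths; the product is concatenation (left to right).\<close>

definition kq_mult :: "nat \<Rightarrow> (nat \<times> nat \<Rightarrow> 'a::field) \<Rightarrow> (nat \<times> nat \<Rightarrow> 'a) \<Rightarrow> (nat \<times> nat \<Rightarrow> 'a)" where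
  "kq_mult k f g = (\<lambda>p. \<Sum>l\<in>{0..snd p}. f (fst p, l) * g ((fst p + l) mod Suc k, snd p - l))"

definition kq_one :: "nat \<Rightarrow> (nat \<times> nat \<Rightarrow> 'a::field)" where
  "kq_one k = (\<lambda>p. if fst p \<le> k \<and> snd p = 0 then 1 else 0)"

definition KQ :: "nat \<Rightarrow> (nat \<times> nat \<Rightarrow> 'a::field) ring" where
  "KQ k =
    \<lparr>carrier = {f. finite {p. f p \<noteq> 0} \<and> (\<forall>v l. k < v \<longrightarrow> f (v, l) = 0)},
     monoid.mult = kq_mult k,
     one = kq_one k,
     ring.zero = 0,
     add = (+)\<rparr>"

definition pth :: "nat \<Rightarrow> nat \<Rightarrow> (nat \<times> nat \<Rightarrow> 'a::field)" where
  "pth v l = (\<lambda>p. if p = (v, l) then 1 else 0)"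

section \<open>Ordinals below omega_1 (modelled by a well-ordered type of type omega_1)\<close>

definition is_omega1 :: "'o::wellorder itself \<Rightarrow> bool" where
  "is_omega1 _ \<longleftrightarrow> \<not> countable (UNIV :: 'o set) \<and> (\<forall>x::'o. countable {y. y < x})"

definition ozero :: "'o::wellorder" where
  "ozero = (LEAST x. True)"

definition osucc :: "'o::wellorder \<Rightarrow> 'o" where
  "osucc x = (LEAST y. x < y)"

definition is_lim :: "'o::wellorder \<Rightarrow> bool" where
  "is_lim x \<longleftrightarrow> (\<exists>y. y < x) \<and> (\<forall>y<x. \<exists>z. y < z \<and> z < x)"

definition ladder_system :: "('o::wellorder \<Rightarrow> nat \<Rightarrow> 'o) \<Rightarrow> bool" where
  "ladder_system C \<longleftrightarrow>
    (\<forall>\<alpha>. is_lim \<alpha> \<longrightarrow>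
        strict_mono (C \<alpha>)
      \<and> (\<forall>n. C \<alpha> n < \<alpha>)
      \<and> (\<forall>\<beta><\<alpha>. \<exists>n. \<beta> \<le> C \<alpha> n)
      \<and> (\<forall>n. \<exists>\<delta><\<alpha>. (\<delta> = ozero \<or> is_lim \<delta>) \<and> C \<alpha> n = (osucc ^^ Suc n) \<delta>))"

text \<open>F = direct sum over xi < omega_1 of F^xi, where F^xi = KQ (xi non-limit) and
  F^alpha = direct sum over n of KQ (alpha limit).  We flatten this to a direct sum of copies
  of KQ indexed by Jidx = {(xi,0) | xi non-limit} \<union> {(alpha,n) | alpha limit}.\<close>

definition Jidx :: "('o::wellorder \<times> nat) set" where
  "Jidx = {(\<xi>, n). \<not> is_lim \<xi> \<longrightarrow> n = 0}"

definition Fmod :: "nat \<Rightarrow> (nat \<times> nat \<Rightarrow> 'a::field, 'o::wellorder \<times> nat \<Rightarrow> nat \<times> nat \<Rightarrow> 'a) rmod" where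
  "Fmod k = dsum (KQ k) Jidx"

definition unitv :: "'j \<Rightarrow> (nat \<times> nat \<Rightarrow> 'a::field) \<Rightarrow> ('j \<Rightarrow> nat \<times> nat \<Rightarrow> 'a)" where
  "unitv j x = (\<lambda>i. if i = j then x else 0)"

text \<open>e^gamma_0 = unitv (gamma,0) e_0, e^{alpha,n}_0 = unitv (alpha,n) e_0.\<close>

definition relgen :: "nat \<Rightarrow> ('o::wellorder \<Rightarrow> nat \<Rightarrow> 'o) \<Rightarrow> 'o \<Rightarrow> nat
                        \<Rightarrow> ('o \<times> nat \<Rightarrow> nat \<times> nat \<Rightarrow> 'a::field)" where
  "relgen k C \<alpha> n =
     unitv (C \<alpha> n, 0) (pth 0 0) - unitv (\<alpha>, n) (pth 0 0)
     + mact (Fmod k) (unitv (\<alpha>, Suc n) (pth 0 0)) (pth 0 (Suc k))"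

definition Isub :: "nat \<Rightarrow> ('o::wellorder \<Rightarrow> nat \<Rightarrow> 'o) \<Rightarrow> ('o \<times> nat \<Rightarrow> nat \<times> nat \<Rightarrow> 'a::field) set" where
  "Isub k C = gen_submod (KQ k) (Fmod k) {relgen k C \<alpha> n | \<alpha> n. is_lim \<alpha>}"

definition Mgens :: "('o::wellorder \<times> nat \<Rightarrow> nat \<times> nat \<Rightarrow> 'a::field) set" where
  "Mgens = {unitv (\<gamma>, 0) (pth 0 0) | \<gamma>. \<not> is_lim \<gamma>} \<union> {unitv (\<alpha>, n) (pth 0 0) | \<alpha> n. is_lim \<alpha>}"

definition M_omega1 :: "nat \<Rightarrow> ('o::wellorder \<Rightarrow> nat \<Rightarrow> 'o)
                         \<Rightarrow> (nat \<times> nat \<Rightarrow> 'a::field, ('o \<times> nat \<Rightarrow> nat \<times> nat \<Rightarrow> 'a) set) rmod" where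
  "M_omega1 k C =
     (let Q = quot_rmod (Fmod k) (Isub k C) in
      sub_rmod Q (gen_submod (KQ k) Q {rcoset (Fmod k) (Isub k C) x | x. x \<in> Mgens}))"

end

theory Submission
  imports Defs
begin

text \<open>\<open>Ext\<^sup>1\<close> is detected by pushing the presentation \<open>0 \<rightarrow> I \<rightarrow> F \<rightarrow> F/I \<rightarrow> 0\<close> out along a map
  \<open>\<theta>\<close> from \<open>I\<close> to the direct sum \<open>N\<close> of \<open>\<omega>\<^sub>1\<close> copies of \<open>KQ\<close>: the pushout splits over \<open>M\<^sub>\<omega>\<^sub>1\<close>
  iff \<open>\<theta>\<close> extends linearly to the preimage of \<open>M\<^sub>\<omega>\<^sub>1\<close> in \<open>F\<close>. Fix an injection
  \<open>h : \<omega>\<^sub>1 \<times> \<omega> \<rightarrow> \<omega>\<^sub>1\<close> and let \<open>\<theta>\<close> send the ladder relation at \<open>(\<alpha>, n)\<close> to the unit vector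
  at \<open>h (\<alpha>, n)\<close>. An extension \<open>u\<close> has finite support on each generator \<open>e\<^sup>\<gamma>\<^sub>0\<close>, so a
  closing-off argument yields a limit \<open>\<alpha>\<close> such that no \<open>u (e\<^sup>\<gamma>\<^sub>0)\<close>, \<open>\<gamma> < \<alpha>\<close>, has support at
  a coordinate \<open>h (\<alpha>, j)\<close>. As the ladder at \<open>\<alpha>\<close> lies below \<open>\<alpha>\<close>, the relations at \<open>\<alpha>\<close> then
  force the coordinates \<open>a\<^sub>m\<close> of \<open>u (e\<^sup>\<alpha>\<^sup>,\<^sup>m\<^sub>0)\<close> at a suitable \<open>h (\<alpha>, j)\<close> to satisfy
  \<open>a\<^sub>m = a\<^sub>m\<^sub>+\<^sub>1 c - \<delta>\<^sub>m\<^sub>j e\<^sub>0\<close> with \<open>a\<^sub>0 = 0\<close>, \<open>c\<close> the cycle at vertex \<open>0\<close>; this is impossible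
  in \<open>KQ\<close>.\<close>

section \<open>The path algebra of the cyclic quiver\<close>

lemma kq_mult_apply: "kq_mult k f g (v, l) = (\<Sum>i\<le>l. f (v, i) * g ((v + i) mod Suc k, l - i))"
  by (simp add: kq_mult_def atLeast0AtMost)

lemma kq_mult_assoc: "kq_mult k (kq_mult k f g) h = kq_mult k f (kq_mult k g h)"
proof (rule ext, clarify)
  fix v l
  define X where "X = (\<lambda>c d. f (v, c) * g ((v + c) mod Suc k, d) * h ((v + c + d) mod Suc k, l - c - d))"
  have "kq_mult k (kq_mult k f g) h (v, l) = (\<Sum>(c, d)\<in>{(c, d). c + d \<le> l}. X c d)"
    unfolding sum.triangle_reindex_eq kq_mult_apply X_def
    by (auto simp: sum_distrib_right mod_add_left_eq intro!: sum.cong)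
  moreover have "{(c, d). c + d \<le> l} = Sigma {..l} (\<lambda>c. {..l - c})" by auto
  then have "kq_mult k f (kq_mult k g h) (v, l) = (\<Sum>(c, d)\<in>{(c, d). c + d \<le> l}. X c d)"
    unfolding kq_mult_apply X_def
    by (simp add: sum.Sigma sum_distrib_left mod_add_left_eq mult.assoc add.assoc)
  ultimately show "kq_mult k (kq_mult k f g) h (v, l) = kq_mult k f (kq_mult k g h) (v, l)"
    by simp
qed

lemma kq_mult_add_right: "kq_mult k f (g1 + g2) = kq_mult k f g1 + kq_mult k f g2"
  by (auto simp: kq_mult_def fun_eq_iff distrib_left sum.distrib)

lemma kq_mult_add_left: "kq_mult k (f1 + f2) g = kq_mult k f1 g + kq_mult k f2 g"
  by (auto simp: kq_mult_def fun_eq_iff distrib_right sum.distrib)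

lemma kq_mult_minus_right: "kq_mult k f (- g) = - kq_mult k f g"
  by (auto simp: kq_mult_def fun_eq_iff sum_negf)

lemma kq_mult_minus_left: "kq_mult k (- f) g = - kq_mult k f g"
  by (auto simp: kq_mult_def fun_eq_iff sum_negf)

lemma kq_mult_diff_left: "kq_mult k (f1 - f2) g = kq_mult k f1 g - kq_mult k f2 g"
  by (auto simp: kq_mult_def fun_eq_iff left_diff_distrib sum_subtractf)

lemma kq_mult_zero_right [simp]: "kq_mult k f 0 = 0"
  by (auto simp: kq_mult_def fun_eq_iff)

lemma kq_mult_zero_left [simp]: "kq_mult k 0 f = 0"
  by (auto simp: kq_mult_def fun_eq_iff)

lemma kq_mult_sum_left: "finite A \<Longrightarrow> kq_mult k (\<Sum>i\<in>A. f i) g = (\<Sum>i\<in>A. kq_mult k (f i) g)"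
proof (induct A rule: finite_induct)
  case (insert x F)
  then show ?case by (simp only: sum.insert[OF insert(1,2)] kq_mult_add_left insert(3))
qed (simp only: sum.empty kq_mult_zero_left)

lemma kq_mult_one_right: "kq_mult k f (kq_one k) = f"
proof (rule ext, clarify)
  fix v l
  have "kq_mult k f (kq_one k) (v, l) = (\<Sum>i\<le>l. if i = l then f (v, i) else 0)"
    unfolding kq_mult_apply kq_one_def by (intro sum.cong) auto
  then show "kq_mult k f (kq_one k) (v, l) = f (v, l)" by simp
qed

definition kq_carrier :: "nat \<Rightarrow> (nat \<times> nat \<Rightarrow> 'a::field) set" where
  "kq_carrier k = {f. finite {p. f p \<noteq> 0} \<and> (\<forall>v l. k < v \<longrightarrow> f (v, l) = 0)}"

lemma KQ_simps [simp]:
  "carrier (KQ k) = kq_carrier k" "monoid.mult (KQ k) = kq_mult k"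
  "one (KQ k) = kq_one k" "zero (KQ k) = 0" "add (KQ k) = (+)"
  by (simp_all add: KQ_def kq_carrier_def)

lemma kq_carrier_zero [simp]: "0 \<in> kq_carrier k"
  by (simp add: kq_carrier_def)

lemma kq_carrier_add: "f \<in> kq_carrier k \<Longrightarrow> g \<in> kq_carrier k \<Longrightarrow> f + g \<in> kq_carrier k"
  unfolding kq_carrier_def by (auto intro: finite_subset[of _ "{p. f p \<noteq> 0} \<union> {p. g p \<noteq> 0}"])

lemma kq_carrier_minus: "f \<in> kq_carrier k \<Longrightarrow> - f \<in> kq_carrier k"
  unfolding kq_carrier_def by auto

lemma kq_carrier_mult:
  assumes "f \<in> kq_carrier k" "g \<in> kq_carrier k"
  shows "kq_mult k f g \<in> kq_carrier k"
proof -
  let ?concat = "\<lambda>(a, b). (fst a, snd a + snd b)"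
  have "{p. kq_mult k f g p \<noteq> 0} \<subseteq> ?concat ` ({p. f p \<noteq> 0} \<times> {p. g p \<noteq> 0})"
  proof
    fix p assume "p \<in> {p. kq_mult k f g p \<noteq> 0}"
    then obtain v l where p: "p = (v, l)"
      and "(\<Sum>i\<le>l. f (v, i) * g ((v + i) mod Suc k, l - i)) \<noteq> 0"
      by (cases p) (auto simp: kq_mult_apply)
    then obtain i where "i \<le> l" "f (v, i) * g ((v + i) mod Suc k, l - i) \<noteq> 0"
      by (meson sum.neutral atMost_iff)
    then show "p \<in> ?concat ` ({p. f p \<noteq> 0} \<times> {p. g p \<noteq> 0})"
      by (intro rev_image_eqI[of "((v, i), ((v + i) mod Suc k, l - i))"]) (auto simp: p)
  qed
  moreover have "finite (?concat ` ({p. f p \<noteq> 0} \<times> {p. g p \<noteq> 0}))"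
    using assms by (auto simp: kq_carrier_def)
  ultimately have "finite {p. kq_mult k f g p \<noteq> 0}" by (rule finite_subset)
  then show ?thesis using assms by (auto simp: kq_carrier_def kq_mult_apply)
qed

lemma kq_one_in_carrier: "kq_one k \<in> kq_carrier k"
proof -
  have "{p. kq_one k p \<noteq> (0::'a)} = {..k} \<times> {0}" by (auto simp: kq_one_def)
  then show ?thesis by (auto simp: kq_carrier_def kq_one_def)
qed

lemma pth_in_carrier: "v \<le> k \<Longrightarrow> pth v l \<in> kq_carrier k"
  unfolding kq_carrier_def pth_def by (auto intro: finite_subset[of _ "{(v, l)}"])

text \<open>The \<open>i\<close>-th power \<open>c\<^sup>i\<close> of the cycle \<open>c = a\<^sub>0 a\<^sub>1 \<dots> a\<^sub>k\<close> at vertex \<open>0\<close>; \<open>c\<^sup>0 = e\<^sub>0\<close>.\<close>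

definition cycle_pow :: "nat \<Rightarrow> nat \<Rightarrow> (nat \<times> nat \<Rightarrow> 'a::field)" where
  "cycle_pow k i = pth 0 (i * Suc k)"

lemma cycle_pow_mult: "kq_mult k (cycle_pow k i) (cycle_pow k m) = (cycle_pow k (i + m) :: nat \<times> nat \<Rightarrow> 'a::field)"
proof (rule ext, clarify)
  fix v l
  show "kq_mult k (cycle_pow k i) (cycle_pow k m) (v, l) = (cycle_pow k (i + m) :: nat \<times> nat \<Rightarrow> 'a) (v, l)"
  proof (cases "v = 0 \<and> i * Suc k \<le> l")
    case True
    then have "kq_mult k (cycle_pow k i) (cycle_pow k m) (v, l)
        = (\<Sum>j\<le>l. if j = i * Suc k then (cycle_pow k m ((v + j) mod Suc k, l - j) :: 'a) else 0)"
      unfolding kq_mult_apply by (intro sum.cong) (auto simp: cycle_pow_def pth_def)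
    also have "\<dots> = cycle_pow k m ((v + i * Suc k) mod Suc k, l - i * Suc k)" using True by simp
    also have "\<dots> = cycle_pow k m (0, l - i * Suc k)"
      using True by (simp only: add_0 mod_mult_self2_is_0)
    also have "\<dots> = cycle_pow k (i + m) (v, l)"
      using True by (auto simp: cycle_pow_def pth_def add_mult_distrib)
    finally show ?thesis .
  next
    case False
    then have "kq_mult k (cycle_pow k i) (cycle_pow k m) (v, l) = (0::'a)"
      unfolding kq_mult_apply by (auto simp: cycle_pow_def pth_def intro!: sum.neutral)
    moreover have "i * Suc k \<le> (i + m) * Suc k" by (rule mult_le_mono1) simp
    then have "cycle_pow k (i + m) (v, l) = (0::'a)"
      using False by (auto simp: cycle_pow_def pth_def)
    ultimately show ?thesis by simp
  qed
qed

lemma cycle_pow_0: "cycle_pow k 0 = pth 0 0"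
  by (simp add: cycle_pow_def)

lemma cycle_pow_1: "cycle_pow k 1 = pth 0 (Suc k)"
  by (simp add: cycle_pow_def)

lemma kq_mult_cycle_pow_below: "l < m * Suc k \<Longrightarrow> kq_mult k a (cycle_pow k m) (v, l) = 0"
  unfolding kq_mult_apply by (auto simp: cycle_pow_def pth_def intro!: sum.neutral)

text \<open>Unwinding the recursion gives \<open>a 0 = a (j + 1) c\<^sup>j\<^sup>+\<^sup>1 - c\<^sup>j\<close>, impossible since
  the right-hand side has coefficient \<open>-1\<close> at the path \<open>c\<^sup>j\<close>.\<close>

lemma no_cycle_recursion:
  fixes a :: "nat \<Rightarrow> nat \<times> nat \<Rightarrow> 'a::field"
  assumes "a 0 = 0"
    and rec: "\<And>m. a m = kq_mult k (a (Suc m)) (cycle_pow k 1) - (if m = j then cycle_pow k 0 else 0)"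
  shows False
proof -
  have unwound: "a 0 = kq_mult k (a (Suc m)) (cycle_pow k (Suc m)) - (if j \<le> m then cycle_pow k j else 0)" for m
  proof (induct m)
    case 0
    then show ?case using rec[of 0] by auto
  next
    case (Suc m)
    have "kq_mult k (a (Suc m)) (cycle_pow k (Suc m))
        = kq_mult k (a (Suc (Suc m))) (cycle_pow k (Suc (Suc m))) - (if Suc m = j then cycle_pow k (Suc m) else 0)"
      by (subst rec) (simp add: kq_mult_diff_left kq_mult_assoc cycle_pow_mult)
    then show ?case using Suc by (cases "j \<le> m"; cases "j = Suc m") (auto simp: not_le)
  qed
  have "0 = kq_mult k (a (Suc j)) (cycle_pow k (Suc j)) - cycle_pow k j"
    using unwound[of j] assms(1) by simp
  then have "(0::'a) = kq_mult k (a (Suc j)) (cycle_pow k (Suc j)) (0, j * Suc k) - cycle_pow k j (0, j * Suc k)"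
    by (metis minus_apply zero_fun_apply)
  also have "\<dots> = -1"
    using kq_mult_cycle_pow_below[of "j * Suc k" "Suc j" k "a (Suc j)" 0]
    by (simp add: cycle_pow_def pth_def)
  finally show False by simp
qed

definition dsum_act :: "nat \<Rightarrow> ('j \<Rightarrow> nat \<times> nat \<Rightarrow> 'a::field) \<Rightarrow> (nat \<times> nat \<Rightarrow> 'a) \<Rightarrow> ('j \<Rightarrow> nat \<times> nat \<Rightarrow> 'a)" where
  "dsum_act k f r = (\<lambda>j. kq_mult k (f j) r)"

definition dsum_carrier :: "nat \<Rightarrow> 'j set \<Rightarrow> ('j \<Rightarrow> nat \<times> nat \<Rightarrow> 'a::field) set" where
  "dsum_carrier k J = {f. (\<forall>j. f j \<in> kq_carrier k) \<and> (\<forall>j. j \<notin> J \<longrightarrow> f j = 0) \<and> finite {j. f j \<noteq> 0}}"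

lemma dsum_simps [simp]:
  "mcarrier (dsum (KQ k) J) = dsum_carrier k J" "madd (dsum (KQ k) J) = (+)"
  "mzero (dsum (KQ k) J) = 0" "mact (dsum (KQ k) J) = dsum_act k"
  by (auto simp: dsum_def dsum_carrier_def dsum_act_def fun_eq_iff)

lemma dsum_act_add_left: "dsum_act k (f + g) r = dsum_act k f r + dsum_act k g r"
  by (simp add: dsum_act_def fun_eq_iff kq_mult_add_left)

lemma dsum_act_diff_left: "dsum_act k (f - g) r = dsum_act k f r - dsum_act k g r"
  by (simp add: dsum_act_def fun_eq_iff kq_mult_diff_left)

lemma dsum_act_zero_left [simp]: "dsum_act k 0 r = 0"
  by (simp add: dsum_act_def fun_eq_iff)

lemma dsum_act_add_right: "dsum_act k f (r + s) = dsum_act k f r + dsum_act k f s"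
  by (simp add: dsum_act_def fun_eq_iff kq_mult_add_right)

lemma dsum_act_assoc: "dsum_act k (dsum_act k f r) s = dsum_act k f (kq_mult k r s)"
  by (simp add: dsum_act_def fun_eq_iff kq_mult_assoc)

lemma dsum_act_one: "dsum_act k f (kq_one k) = f"
  by (simp add: dsum_act_def fun_eq_iff kq_mult_one_right)

lemma dsum_act_minus_one: "dsum_act k f (- kq_one k) = - f"
  by (simp add: dsum_act_def fun_eq_iff kq_mult_minus_right kq_mult_one_right)

lemma dsum_carrier_add: "f \<in> dsum_carrier k J \<Longrightarrow> g \<in> dsum_carrier k J \<Longrightarrow> f + g \<in> dsum_carrier k J"
  unfolding dsum_carrier_def
  by (auto intro: kq_carrier_add finite_subset[of _ "{j. f j \<noteq> 0} \<union> {j. g j \<noteq> 0}"])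

lemma dsum_carrier_minus: "f \<in> dsum_carrier k J \<Longrightarrow> - f \<in> dsum_carrier k J"
  unfolding dsum_carrier_def by (auto intro: kq_carrier_minus)

lemma dsum_carrier_diff: "f \<in> dsum_carrier k J \<Longrightarrow> g \<in> dsum_carrier k J \<Longrightarrow> f - g \<in> dsum_carrier k J"
  using dsum_carrier_add[of f k J "- g"] dsum_carrier_minus[of g k J] by simp

lemma dsum_carrier_zero [simp]: "0 \<in> dsum_carrier k J"
  unfolding dsum_carrier_def by auto

lemma dsum_carrier_nonempty [simp]: "dsum_carrier k J \<noteq> {}"
  using dsum_carrier_zero by blast

lemma dsum_carrier_act: "f \<in> dsum_carrier k J \<Longrightarrow> r \<in> kq_carrier k \<Longrightarrow> dsum_act k f r \<in> dsum_carrier k J"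
  unfolding dsum_carrier_def dsum_act_def
  by (auto intro: kq_carrier_mult finite_subset[of _ "{j. f j \<noteq> 0}"])

lemma dsum_carrier_unitv: "j \<in> J \<Longrightarrow> x \<in> kq_carrier k \<Longrightarrow> unitv j x \<in> dsum_carrier k J"
  unfolding dsum_carrier_def unitv_def by (auto intro: finite_subset[of _ "{j}"])

lemma Fmod_simps [simp]:
  "mcarrier (Fmod k) = dsum_carrier k Jidx" "madd (Fmod k) = (+)"
  "mzero (Fmod k) = 0" "mact (Fmod k) = dsum_act k"
  by (simp_all add: Fmod_def)

lemma Isub_induct [consumes 1, case_names base zero add act]:
  assumes "x \<in> Isub k C"
    and "\<And>\<alpha> n. is_lim \<alpha> \<Longrightarrow> P (relgen k C \<alpha> n)"
    and "P 0"
    and "\<And>x y. P x \<Longrightarrow> P y \<Longrightarrow> P (x + y)"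
    and "\<And>x r. P x \<Longrightarrow> r \<in> kq_carrier k \<Longrightarrow> P (dsum_act k x r)"
  shows "P x"
  using assms(1) unfolding Isub_def
proof (induct rule: gen_submod.induct)
  case (gen_add x y)
  then have "P (x + y)" using assms(4) by blast
  then show ?case by (simp only: Fmod_simps)
next
  case (gen_act x r)
  then show ?case using assms(5) by simp
next
  case gen_zero
  then show ?case using assms(3) by (simp only: Fmod_simps)
qed (use assms(2) in auto)

lemma Isub_zero: "0 \<in> Isub k C"
  unfolding Isub_def using gen_submod.gen_zero[where R = "KQ k" and M = "Fmod k"] by simp

lemma Isub_add: "x \<in> Isub k C \<Longrightarrow> y \<in> Isub k C \<Longrightarrow> x + y \<in> Isub k C"
  unfolding Isub_def using gen_submod.gen_add[where R = "KQ k" and M = "Fmod k"] by simp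

lemma Isub_act: "x \<in> Isub k C \<Longrightarrow> r \<in> kq_carrier k \<Longrightarrow> dsum_act k x r \<in> Isub k C"
  unfolding Isub_def using gen_submod.gen_act[where R = "KQ k" and M = "Fmod k"] by simp

lemma relgen_in_Isub: "is_lim \<alpha> \<Longrightarrow> relgen k C \<alpha> n \<in> Isub k C"
  unfolding Isub_def by (rule gen_submod.gen_base) auto

lemma Isub_minus: "x \<in> Isub k C \<Longrightarrow> - x \<in> Isub k C"
  using Isub_act[OF _ kq_carrier_minus[OF kq_one_in_carrier]] by (simp add: dsum_act_minus_one)

lemma Isub_diff: "x \<in> Isub k C \<Longrightarrow> y \<in> Isub k C \<Longrightarrow> x - y \<in> Isub k C"
  using Isub_add[OF _ Isub_minus, of x k C y] by simp

definition cls :: "nat \<Rightarrow> ('o::wellorder \<Rightarrow> nat \<Rightarrow> 'o) \<Rightarrow> ('o \<times> nat \<Rightarrow> nat \<times> nat \<Rightarrow> 'a::field)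
                    \<Rightarrow> ('o \<times> nat \<Rightarrow> nat \<times> nat \<Rightarrow> 'a) set" where
  "cls k C x = rcoset (Fmod k) (Isub k C) x"

lemma cls_mem_iff: "z \<in> cls k C x \<longleftrightarrow> z - x \<in> Isub k C"
  unfolding cls_def rcoset_def by (auto simp: algebra_simps intro!: exI[of _ "z - x"])

lemma cls_eq_iff: "cls k C x = cls k C y \<longleftrightarrow> x - y \<in> Isub k C"
proof
  assume "cls k C x = cls k C y"
  moreover have "x \<in> cls k C x" by (simp add: cls_mem_iff Isub_zero)
  ultimately show "x - y \<in> Isub k C" by (simp add: cls_mem_iff)
next
  assume xy: "x - y \<in> Isub k C"
  have "z - x \<in> Isub k C \<longleftrightarrow> z - y \<in> Isub k C" for z
    using Isub_add[OF _ xy, of "z - x"] Isub_diff[OF _ xy, of "z - y"] by auto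
  then show "cls k C x = cls k C y" unfolding set_eq_iff cls_mem_iff by blast
qed

lemma cls_eq_zero_iff: "cls k C x = cls k C 0 \<longleftrightarrow> x \<in> Isub k C"
  by (simp add: cls_eq_iff)

lemma quot_add_cls: "madd (quot_rmod (Fmod k) (Isub k C)) (cls k C x) (cls k C y) = cls k C (x + y)"
proof -
  let ?a = "SOME a. a \<in> cls k C x" and ?b = "SOME b. b \<in> cls k C y"
  have "?a \<in> cls k C x" by (rule someI[where x = x]) (simp add: cls_mem_iff Isub_zero)
  moreover have "?b \<in> cls k C y" by (rule someI[where x = y]) (simp add: cls_mem_iff Isub_zero)
  ultimately
  have "?a - x \<in> Isub k C" "?b - y \<in> Isub k C" by (simp_all only: cls_mem_iff)
  then have "(?a - x) + (?b - y) \<in> Isub k C" by (rule Isub_add)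
  moreover have "(?a + ?b) - (x + y) = (?a - x) + (?b - y)" by (simp add: algebra_simps)
  ultimately have "cls k C (?a + ?b) = cls k C (x + y)" by (simp only: cls_eq_iff)
  then show ?thesis by (simp add: quot_rmod_def cls_def[symmetric])
qed

lemma quot_act_cls:
  "r \<in> kq_carrier k \<Longrightarrow> mact (quot_rmod (Fmod k) (Isub k C)) (cls k C x) r = cls k C (dsum_act k x r)"
proof -
  assume r: "r \<in> kq_carrier k"
  let ?a = "SOME a. a \<in> cls k C x"
  have "?a \<in> cls k C x" by (rule someI[where x = x]) (simp add: cls_mem_iff Isub_zero)
  then have "dsum_act k (?a - x) r \<in> Isub k C" by (simp only: cls_mem_iff Isub_act r)
  then have "cls k C (dsum_act k ?a r) = cls k C (dsum_act k x r)"
    by (simp add: dsum_act_diff_left cls_eq_iff)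
  then show ?thesis by (simp add: quot_rmod_def cls_def[symmetric])
qed

lemma quot_zero: "mzero (quot_rmod (Fmod k) (Isub k C)) = cls k C 0"
  by (simp add: quot_rmod_def cls_def)

lemma M_omega1_simps:
  "madd (M_omega1 k C) = madd (quot_rmod (Fmod k) (Isub k C))"
  "mact (M_omega1 k C) = mact (quot_rmod (Fmod k) (Isub k C))"
  "mzero (M_omega1 k C) = cls k C 0"
  "mcarrier (M_omega1 k C) = gen_submod (KQ k) (quot_rmod (Fmod k) (Isub k C)) {cls k C x | x. x \<in> Mgens}"
  by (auto simp: M_omega1_def sub_rmod_def Let_def quot_rmod_def cls_def)

lemma M_omega1_add_cls: "madd (M_omega1 k C) (cls k C x) (cls k C y) = cls k C (x + y)"
  by (simp add: M_omega1_simps quot_add_cls)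

lemma M_omega1_act_cls:
  "r \<in> kq_carrier k \<Longrightarrow> mact (M_omega1 k C) (cls k C x) r = cls k C (dsum_act k x r)"
  by (simp add: M_omega1_simps quot_act_cls)

lemma M_omega1_elem_cls: "X \<in> mcarrier (M_omega1 k C) \<Longrightarrow> \<exists>x. X = cls k C x"
  unfolding M_omega1_simps
proof (induct rule: gen_submod.induct)
  case (gen_add X Y)
  then obtain x y where "X = cls k C x" "Y = cls k C y" by blast
  then show ?case by (simp only: quot_add_cls) blast
next
  case (gen_act X r)
  then obtain x where "X = cls k C x" by blast
  then show ?case using gen_act(3) by (simp only: KQ_simps quot_act_cls) blast
qed (blast, use quot_zero in blast)

lemma M_omega1_add_closed:
  "X \<in> mcarrier (M_omega1 k C) \<Longrightarrow> Y \<in> mcarrier (M_omega1 k C) \<Longrightarrow> madd (M_omega1 k C) X Y \<in> mcarrier (M_omega1 k C)"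
  unfolding M_omega1_simps by (rule gen_submod.gen_add)

lemma M_omega1_act_closed:
  "X \<in> mcarrier (M_omega1 k C) \<Longrightarrow> r \<in> kq_carrier k \<Longrightarrow> mact (M_omega1 k C) X r \<in> mcarrier (M_omega1 k C)"
  unfolding M_omega1_simps by (rule gen_submod.gen_act) auto

lemma M_omega1_zero_closed: "mzero (M_omega1 k C) \<in> mcarrier (M_omega1 k C)"
  using gen_submod.gen_zero[where R = "KQ k" and M = "quot_rmod (Fmod k) (Isub k C)"]
  by (simp only: M_omega1_simps quot_zero)

lemma cls_in_M_omega1: "x \<in> Mgens \<Longrightarrow> cls k C x \<in> mcarrier (M_omega1 k C)"
  unfolding M_omega1_simps by (rule gen_submod.gen_base) blast

context
  fixes k :: nat and C :: "'o::wellorder \<Rightarrow> nat \<Rightarrow> 'o"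
begin

lemma M_omega1_assoc:
  assumes "X \<in> mcarrier (M_omega1 k C)" "Y \<in> mcarrier (M_omega1 k C)" "Z \<in> mcarrier (M_omega1 k C)"
  shows "madd (M_omega1 k C) (madd (M_omega1 k C) X Y) Z = madd (M_omega1 k C) X (madd (M_omega1 k C) Y Z)"
proof -
  obtain x y z where "X = cls k C x" "Y = cls k C y" "Z = cls k C z"
    using assms M_omega1_elem_cls by meson
  then show ?thesis by (simp only: M_omega1_add_cls add.assoc)
qed

lemma M_omega1_comm:
  assumes "X \<in> mcarrier (M_omega1 k C)" "Y \<in> mcarrier (M_omega1 k C)"
  shows "madd (M_omega1 k C) X Y = madd (M_omega1 k C) Y X"
proof -
  obtain x y where "X = cls k C x" "Y = cls k C y" using assms M_omega1_elem_cls by meson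
  then show ?thesis by (simp only: M_omega1_add_cls add.commute)
qed

lemma M_omega1_zero_left:
  assumes "X \<in> mcarrier (M_omega1 k C)"
  shows "madd (M_omega1 k C) (mzero (M_omega1 k C)) X = X"
proof -
  obtain x where "X = cls k C x" using assms M_omega1_elem_cls by meson
  then show ?thesis by (simp only: M_omega1_add_cls M_omega1_simps(3) add_0)
qed

lemma M_omega1_act_add_right:
  assumes "X \<in> mcarrier (M_omega1 k C)" "r \<in> kq_carrier k" "s \<in> kq_carrier k"
  shows "mact (M_omega1 k C) X (r + s) = madd (M_omega1 k C) (mact (M_omega1 k C) X r) (mact (M_omega1 k C) X s)"
proof -
  obtain x where "X = cls k C x" using assms M_omega1_elem_cls by meson
  then show ?thesis
    using assms kq_carrier_add[OF assms(2,3)]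
    by (simp only: M_omega1_add_cls M_omega1_act_cls dsum_act_add_right)
qed

lemma M_omega1_act_add_left:
  assumes "X \<in> mcarrier (M_omega1 k C)" "Y \<in> mcarrier (M_omega1 k C)" "r \<in> kq_carrier k"
  shows "mact (M_omega1 k C) (madd (M_omega1 k C) X Y) r = madd (M_omega1 k C) (mact (M_omega1 k C) X r) (mact (M_omega1 k C) Y r)"
proof -
  obtain x y where "X = cls k C x" "Y = cls k C y" using assms M_omega1_elem_cls by meson
  then show ?thesis using assms by (simp only: M_omega1_add_cls M_omega1_act_cls dsum_act_add_left)
qed

lemma M_omega1_act_assoc:
  assumes "X \<in> mcarrier (M_omega1 k C)" "r \<in> kq_carrier k" "s \<in> kq_carrier k"
  shows "mact (M_omega1 k C) X (kq_mult k r s) = mact (M_omega1 k C) (mact (M_omega1 k C) X r) s"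
proof -
  obtain x where "X = cls k C x" using assms M_omega1_elem_cls by meson
  then show ?thesis
    using assms kq_carrier_mult[OF assms(2,3)] by (simp only: M_omega1_act_cls dsum_act_assoc)
qed

lemma M_omega1_act_one:
  assumes "X \<in> mcarrier (M_omega1 k C)"
  shows "mact (M_omega1 k C) X (kq_one k) = X"
proof -
  obtain x where "X = cls k C x" using assms M_omega1_elem_cls by meson
  then show ?thesis by (simp only: M_omega1_act_cls[OF kq_one_in_carrier] dsum_act_one)
qed

lemma M_omega1_add_neg:
  assumes "X \<in> mcarrier (M_omega1 k C)"
  shows "madd (M_omega1 k C) X (mact (M_omega1 k C) X (- kq_one k)) = mzero (M_omega1 k C)"
proof -
  obtain x where "X = cls k C x" using assms M_omega1_elem_cls by meson
  then show ?thesis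
    by (simp only: M_omega1_add_cls M_omega1_act_cls[OF kq_carrier_minus[OF kq_one_in_carrier]]
        dsum_act_minus_one M_omega1_simps(3) right_minus)
qed

lemma M_omega1_zero_act: "r \<in> kq_carrier k \<Longrightarrow> mact (M_omega1 k C) (mzero (M_omega1 k C)) r = mzero (M_omega1 k C)"
  by (simp only: M_omega1_act_cls M_omega1_simps(3) dsum_act_zero_left)

text \<open>Lifting \<open>0\<close> to \<open>0\<close> makes \<open>(0, 0)\<close> the zero of \<open>ext_mod\<close> below.\<close>

definition lift :: "('o \<times> nat \<Rightarrow> nat \<times> nat \<Rightarrow> 'a::field) set \<Rightarrow> ('o \<times> nat \<Rightarrow> nat \<times> nat \<Rightarrow> 'a)" where
  "lift X = (if X = cls k C 0 then 0 else SOME x. cls k C x = X)"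

lemma cls_lift:
  assumes "X \<in> mcarrier (M_omega1 k C)"
  shows "cls k C (lift X) = X"
proof -
  have "\<exists>x. cls k C x = X" using M_omega1_elem_cls[OF assms] by blast
  from someI_ex[OF this] show ?thesis unfolding lift_def by simp
qed

lemma lift_zero: "lift (mzero (M_omega1 k C)) = 0"
  by (simp add: lift_def M_omega1_simps(3))

definition add_defect :: "('o \<times> nat \<Rightarrow> nat \<times> nat \<Rightarrow> 'a::field) set \<Rightarrow> _ \<Rightarrow> ('o \<times> nat \<Rightarrow> nat \<times> nat \<Rightarrow> 'a)" where
  "add_defect X Y = lift X + lift Y - lift (madd (M_omega1 k C) X Y)"

definition act_defect :: "('o \<times> nat \<Rightarrow> nat \<times> nat \<Rightarrow> 'a::field) set \<Rightarrow> _ \<Rightarrow> ('o \<times> nat \<Rightarrow> nat \<times> nat \<Rightarrow> 'a)" where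
  "act_defect X r = dsum_act k (lift X) r - lift (mact (M_omega1 k C) X r)"

lemma add_defect_in_Isub:
  assumes "X \<in> mcarrier (M_omega1 k C)" "Y \<in> mcarrier (M_omega1 k C)"
  shows "add_defect X Y \<in> Isub k C"
proof -
  have "cls k C (lift X + lift Y) = madd (M_omega1 k C) X Y"
    using assms by (simp add: M_omega1_add_cls[symmetric] cls_lift)
  also have "\<dots> = cls k C (lift (madd (M_omega1 k C) X Y))"
    using cls_lift[OF M_omega1_add_closed[OF assms]] by simp
  finally show ?thesis unfolding add_defect_def by (simp only: cls_eq_iff)
qed

lemma act_defect_in_Isub:
  assumes "X \<in> mcarrier (M_omega1 k C)" "r \<in> kq_carrier k"
  shows "act_defect X r \<in> Isub k C"
proof -
  have "cls k C (dsum_act k (lift X) r) = mact (M_omega1 k C) X r"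
    using assms by (simp add: M_omega1_act_cls[symmetric] cls_lift)
  also have "\<dots> = cls k C (lift (mact (M_omega1 k C) X r))"
    using cls_lift[OF M_omega1_act_closed[OF assms]] by simp
  finally show ?thesis unfolding act_defect_def by (simp only: cls_eq_iff)
qed

lemma add_defect_cocycle:
  assumes "X \<in> mcarrier (M_omega1 k C)" "Y \<in> mcarrier (M_omega1 k C)" "Z \<in> mcarrier (M_omega1 k C)"
  shows "add_defect X Y + add_defect (madd (M_omega1 k C) X Y) Z = add_defect Y Z + add_defect X (madd (M_omega1 k C) Y Z)"
  unfolding add_defect_def using M_omega1_assoc[OF assms] by (simp add: algebra_simps)

lemma add_defect_comm:
  assumes "X \<in> mcarrier (M_omega1 k C)" "Y \<in> mcarrier (M_omega1 k C)"
  shows "add_defect X Y = add_defect Y X"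
  unfolding add_defect_def using M_omega1_comm[OF assms] by (simp add: algebra_simps)

lemma act_defect_add_right:
  assumes "X \<in> mcarrier (M_omega1 k C)" "r \<in> kq_carrier k" "s \<in> kq_carrier k"
  shows "act_defect X (r + s) = act_defect X r + act_defect X s + add_defect (mact (M_omega1 k C) X r) (mact (M_omega1 k C) X s)"
  unfolding add_defect_def act_defect_def using M_omega1_act_add_right[OF assms]
  by (simp add: dsum_act_add_right algebra_simps)

lemma act_defect_add_left:
  assumes "X \<in> mcarrier (M_omega1 k C)" "Y \<in> mcarrier (M_omega1 k C)" "r \<in> kq_carrier k"
  shows "dsum_act k (add_defect X Y) r + act_defect (madd (M_omega1 k C) X Y) r
    = act_defect X r + act_defect Y r + add_defect (mact (M_omega1 k C) X r) (mact (M_omega1 k C) Y r)"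
  unfolding add_defect_def act_defect_def using M_omega1_act_add_left[OF assms]
  by (simp add: dsum_act_add_left dsum_act_diff_left algebra_simps)

lemma act_defect_mult:
  assumes "X \<in> mcarrier (M_omega1 k C)" "r \<in> kq_carrier k" "s \<in> kq_carrier k"
  shows "act_defect X (kq_mult k r s) = dsum_act k (act_defect X r) s + act_defect (mact (M_omega1 k C) X r) s"
  unfolding act_defect_def using M_omega1_act_assoc[OF assms]
  by (simp add: dsum_act_diff_left dsum_act_assoc algebra_simps)

end

section \<open>Pushing the presentation of \<open>M\<^sub>\<omega>\<^sub>1\<close> out along a map \<open>\<theta>\<close>\<close>

text \<open>The pushout of \<open>0 \<rightarrow> I \<rightarrow> F \<rightarrow> F/I \<rightarrow> 0\<close> along \<open>\<theta> : I \<rightarrow> N\<close>, restricted to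
  \<open>M\<^sub>\<omega>\<^sub>1 \<subseteq> F/I\<close>; its carrier is encoded as \<open>N \<times> M\<^sub>\<omega>\<^sub>1\<close> by means of the set-theoretic section
  \<open>lift\<close>, which twists addition and action by \<open>\<theta>\<close> of the defects of \<open>lift\<close>.\<close>

definition ext_mod :: "nat \<Rightarrow> ('o::wellorder \<Rightarrow> nat \<Rightarrow> 'o)
    \<Rightarrow> (('o \<times> nat \<Rightarrow> nat \<times> nat \<Rightarrow> 'a::field) \<Rightarrow> ('n \<Rightarrow> nat \<times> nat \<Rightarrow> 'a))
    \<Rightarrow> (nat \<times> nat \<Rightarrow> 'a, ('n \<Rightarrow> nat \<times> nat \<Rightarrow> 'a) \<times> ('o \<times> nat \<Rightarrow> nat \<times> nat \<Rightarrow> 'a) set) rmod" where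
  "ext_mod k C \<theta> =
    \<lparr>mcarrier = dsum_carrier k UNIV \<times> mcarrier (M_omega1 k C),
     madd = (\<lambda>(w1, X1) (w2, X2). (w1 + w2 + \<theta> (add_defect k C X1 X2), madd (M_omega1 k C) X1 X2)),
     mzero = (0, mzero (M_omega1 k C)),
     mact = (\<lambda>(w, X) r. (dsum_act k w r + \<theta> (act_defect k C X r), mact (M_omega1 k C) X r))\<rparr>"

text \<open>What a splitting of \<open>ext_mod k C \<theta>\<close> amounts to: a linear extension of \<open>\<theta>\<close> from \<open>I\<close>
  to the preimage of \<open>M\<^sub>\<omega>\<^sub>1\<close> in \<open>F\<close>.\<close>

definition theta_extension :: "nat \<Rightarrow> ('o::wellorder \<Rightarrow> nat \<Rightarrow> 'o)
    \<Rightarrow> (('o \<times> nat \<Rightarrow> nat \<times> nat \<Rightarrow> 'a::field) \<Rightarrow> ('n \<Rightarrow> nat \<times> nat \<Rightarrow> 'a))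
    \<Rightarrow> (('o \<times> nat \<Rightarrow> nat \<times> nat \<Rightarrow> 'a) \<Rightarrow> ('n \<Rightarrow> nat \<times> nat \<Rightarrow> 'a)) \<Rightarrow> bool" where
  "theta_extension k C \<theta> u \<longleftrightarrow>
     (\<forall>x y. cls k C x \<in> mcarrier (M_omega1 k C) \<longrightarrow> cls k C y \<in> mcarrier (M_omega1 k C)
        \<longrightarrow> u (x + y) = u x + u y)
   \<and> (\<forall>x r. cls k C x \<in> mcarrier (M_omega1 k C) \<longrightarrow> r \<in> kq_carrier k
        \<longrightarrow> u (dsum_act k x r) = dsum_act k (u x) r)
   \<and> (\<forall>x\<in>Isub k C. u x = \<theta> x)
   \<and> (\<forall>x. cls k C x \<in> mcarrier (M_omega1 k C) \<longrightarrow> u x \<in> dsum_carrier k UNIV)"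

lemma theta_extensionD:
  assumes "theta_extension k C \<theta> u"
  shows "cls k C x \<in> mcarrier (M_omega1 k C) \<Longrightarrow> cls k C y \<in> mcarrier (M_omega1 k C)
      \<Longrightarrow> u (x + y) = u x + u y"
    and "cls k C x \<in> mcarrier (M_omega1 k C) \<Longrightarrow> r \<in> kq_carrier k
      \<Longrightarrow> u (dsum_act k x r) = dsum_act k (u x) r"
    and "x \<in> Isub k C \<Longrightarrow> u x = \<theta> x"
    and "cls k C x \<in> mcarrier (M_omega1 k C) \<Longrightarrow> u x \<in> dsum_carrier k UNIV"
  using assms unfolding theta_extension_def by blast+

locale theta_pushout =
  fixes k :: nat and C :: "'o::wellorder \<Rightarrow> nat \<Rightarrow> 'o"
    and \<theta> :: "('o \<times> nat \<Rightarrow> nat \<times> nat \<Rightarrow> 'a::field) \<Rightarrow> ('n \<Rightarrow> nat \<times> nat \<Rightarrow> 'a)"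
  assumes theta_add: "\<theta> (x + y) = \<theta> x + \<theta> y"
    and theta_act: "r \<in> kq_carrier k \<Longrightarrow> \<theta> (dsum_act k x r) = dsum_act k (\<theta> x) r"
    and theta_Isub: "x \<in> Isub k C \<Longrightarrow> \<theta> x \<in> dsum_carrier k UNIV"
begin

abbreviation (input) E where "E \<equiv> ext_mod k C \<theta>"
abbreviation (input) Mc where "Mc \<equiv> mcarrier (M_omega1 k C)"

lemma theta_zero: "\<theta> 0 = 0"
  using theta_add[of 0 0] by simp

lemma theta_diff: "\<theta> (x - y) = \<theta> x - \<theta> y"
  using theta_add[of "x - y" y] by (simp add: eq_diff_eq)

lemma ext_mod_simps:
  "mcarrier E = dsum_carrier k UNIV \<times> Mc"
  "madd E (w1, X1) (w2, X2) = (w1 + w2 + \<theta> (add_defect k C X1 X2), madd (M_omega1 k C) X1 X2)"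
  "mzero E = (0, mzero (M_omega1 k C))"
  "mact E (w, X) r = (dsum_act k w r + \<theta> (act_defect k C X r), mact (M_omega1 k C) X r)"
  by (simp_all add: ext_mod_def)

lemma ext_mod_add_closed:
  "w1 \<in> dsum_carrier k UNIV \<Longrightarrow> w2 \<in> dsum_carrier k UNIV \<Longrightarrow> X1 \<in> Mc \<Longrightarrow> X2 \<in> Mc
    \<Longrightarrow> madd E (w1, X1) (w2, X2) \<in> mcarrier E"
  by (simp add: ext_mod_simps dsum_carrier_add theta_Isub add_defect_in_Isub M_omega1_add_closed)

lemma ext_mod_act_closed:
  "w \<in> dsum_carrier k UNIV \<Longrightarrow> X \<in> Mc \<Longrightarrow> r \<in> kq_carrier k \<Longrightarrow> mact E (w, X) r \<in> mcarrier E"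
  by (simp add: ext_mod_simps dsum_carrier_add dsum_carrier_act theta_Isub act_defect_in_Isub
      M_omega1_act_closed)

lemma ext_mod_assoc:
  assumes "X1 \<in> Mc" "X2 \<in> Mc" "X3 \<in> Mc"
  shows "madd E (madd E (w1, X1) (w2, X2)) (w3, X3) = madd E (w1, X1) (madd E (w2, X2) (w3, X3))"
proof -
  let ?m = "madd (M_omega1 k C)" and ?d = "\<lambda>X Y. \<theta> (add_defect k C X Y)"
  have cocycle: "?d X1 X2 + ?d (?m X1 X2) X3 = ?d X2 X3 + ?d X1 (?m X2 X3)"
    using arg_cong[OF add_defect_cocycle[OF assms], of \<theta>] by (simp only: theta_add)
  have "w1 + w2 + ?d X1 X2 + w3 + ?d (?m X1 X2) X3 = w1 + w2 + w3 + (?d X1 X2 + ?d (?m X1 X2) X3)"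
    by (simp add: algebra_simps)
  also have "\<dots> = w1 + (w2 + w3 + ?d X2 X3) + ?d X1 (?m X2 X3)"
    by (simp only: cocycle) (simp add: algebra_simps)
  finally show ?thesis by (simp add: ext_mod_simps M_omega1_assoc[OF assms])
qed

lemma ext_mod_comm:
  assumes "X1 \<in> Mc" "X2 \<in> Mc"
  shows "madd E (w1, X1) (w2, X2) = madd E (w2, X2) (w1, X1)"
  by (simp add: ext_mod_simps M_omega1_comm[OF assms] add_defect_comm[OF assms] algebra_simps)

lemma ext_mod_zero_left: "X \<in> Mc \<Longrightarrow> madd E (mzero E) (w, X) = (w, X)"
  by (simp add: ext_mod_simps M_omega1_zero_left add_defect_def lift_zero theta_zero)

lemma ext_mod_neg:
  assumes "w \<in> dsum_carrier k UNIV" "X \<in> Mc"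
  shows "\<exists>y\<in>mcarrier E. madd E (w, X) y = mzero E"
proof -
  let ?Y = "mact (M_omega1 k C) X (- kq_one k)"
  let ?w = "- w - \<theta> (add_defect k C X ?Y)"
  have Y: "?Y \<in> Mc" by (rule M_omega1_act_closed[OF assms(2) kq_carrier_minus[OF kq_one_in_carrier]])
  then have "(?w, ?Y) \<in> mcarrier E"
    using assms by (simp add: ext_mod_simps dsum_carrier_diff dsum_carrier_minus theta_Isub add_defect_in_Isub)
  moreover have "madd E (w, X) (?w, ?Y) = mzero E"
    using M_omega1_add_neg[OF assms(2)] by (simp add: ext_mod_simps)
  ultimately show ?thesis by blast
qed

lemma ext_mod_act_add_right:
  assumes "X \<in> Mc" "r \<in> kq_carrier k" "s \<in> kq_carrier k"
  shows "mact E (w, X) (r + s) = madd E (mact E (w, X) r) (mact E (w, X) s)"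
proof -
  let ?a = "mact (M_omega1 k C) X"
  have "\<theta> (act_defect k C X (r + s))
      = \<theta> (act_defect k C X r) + \<theta> (act_defect k C X s) + \<theta> (add_defect k C (?a r) (?a s))"
    by (simp only: act_defect_add_right[OF assms] theta_add)
  then show ?thesis
    by (simp add: ext_mod_simps M_omega1_act_add_right[OF assms] dsum_act_add_right algebra_simps)
qed

lemma ext_mod_act_add_left:
  assumes "X1 \<in> Mc" "X2 \<in> Mc" "r \<in> kq_carrier k"
  shows "mact E (madd E (w1, X1) (w2, X2)) r = madd E (mact E (w1, X1) r) (mact E (w2, X2) r)"
proof -
  let ?a = "\<lambda>X. mact (M_omega1 k C) X r" and ?m = "madd (M_omega1 k C)"
  have cocycle: "dsum_act k (\<theta> (add_defect k C X1 X2)) r + \<theta> (act_defect k C (?m X1 X2) r)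
      = \<theta> (act_defect k C X1 r) + \<theta> (act_defect k C X2 r) + \<theta> (add_defect k C (?a X1) (?a X2))"
    using arg_cong[OF act_defect_add_left[OF assms], of \<theta>] by (simp only: theta_add theta_act[OF assms(3)])
  have "dsum_act k (w1 + w2 + \<theta> (add_defect k C X1 X2)) r + \<theta> (act_defect k C (?m X1 X2) r)
      = dsum_act k w1 r + dsum_act k w2 r
        + (dsum_act k (\<theta> (add_defect k C X1 X2)) r + \<theta> (act_defect k C (?m X1 X2) r))"
    by (simp add: dsum_act_add_left algebra_simps)
  also have "\<dots> = dsum_act k w1 r + \<theta> (act_defect k C X1 r) + (dsum_act k w2 r + \<theta> (act_defect k C X2 r))
        + \<theta> (add_defect k C (?a X1) (?a X2))"
    by (simp only: cocycle) (simp add: algebra_simps)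
  finally show ?thesis by (simp add: ext_mod_simps M_omega1_act_add_left[OF assms])
qed

lemma ext_mod_act_assoc:
  assumes "X \<in> Mc" "r \<in> kq_carrier k" "s \<in> kq_carrier k"
  shows "mact E (w, X) (kq_mult k r s) = mact E (mact E (w, X) r) s"
proof -
  have "\<theta> (act_defect k C X (kq_mult k r s))
      = dsum_act k (\<theta> (act_defect k C X r)) s + \<theta> (act_defect k C (mact (M_omega1 k C) X r) s)"
    by (simp only: act_defect_mult[OF assms] theta_add theta_act[OF assms(3)])
  then show ?thesis
    by (simp add: ext_mod_simps M_omega1_act_assoc[OF assms] dsum_act_add_left dsum_act_assoc
        algebra_simps)
qed

lemma ext_mod_act_one: "X \<in> Mc \<Longrightarrow> mact E (w, X) (kq_one k) = (w, X)"
  by (simp add: ext_mod_simps M_omega1_act_one dsum_act_one act_defect_def cls_lift theta_zero)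

lemma ext_mod_right_module: "right_module (KQ k) E"
  unfolding right_module_def KQ_simps ext_mod_simps(1)
proof (intro conjI)
  show "mzero E \<in> dsum_carrier k UNIV \<times> Mc"
    by (simp add: ext_mod_simps M_omega1_zero_closed)
  show "\<forall>x\<in>dsum_carrier k UNIV \<times> Mc. \<exists>y\<in>dsum_carrier k UNIV \<times> Mc. madd E x y = mzero E"
    using ext_mod_neg unfolding ext_mod_simps(1) by blast
  show "\<forall>x\<in>dsum_carrier k UNIV \<times> Mc. \<forall>y\<in>dsum_carrier k UNIV \<times> Mc.
      madd E x y \<in> dsum_carrier k UNIV \<times> Mc"
    using ext_mod_add_closed unfolding ext_mod_simps(1) by blast
  show "\<forall>x\<in>dsum_carrier k UNIV \<times> Mc. \<forall>r\<in>kq_carrier k. mact E x r \<in> dsum_carrier k UNIV \<times> Mc"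
    using ext_mod_act_closed unfolding ext_mod_simps(1) by blast
qed (auto intro: ext_mod_assoc ext_mod_comm ext_mod_zero_left ext_mod_act_add_right
    ext_mod_act_add_left ext_mod_act_assoc ext_mod_act_one)

lemma ext_mod_inclusion_hom: "rmod_hom (KQ k) (dsum (KQ k) UNIV) E (\<lambda>w. (w, mzero (M_omega1 k C)))"
  unfolding rmod_hom_def
  by (simp add: ext_mod_simps M_omega1_zero_closed M_omega1_zero_left M_omega1_zero_act
      add_defect_def act_defect_def lift_zero theta_zero Pi_iff)

lemma ext_mod_projection_hom: "rmod_hom (KQ k) E (M_omega1 k C) snd"
  unfolding rmod_hom_def by (auto simp: ext_mod_simps)

lemma ext_mod_projection_surj: "snd ` mcarrier E = Mc"
  by (simp add: ext_mod_simps)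

lemma ext_mod_projection_kernel:
  "(\<lambda>w. (w, mzero (M_omega1 k C))) ` mcarrier (dsum (KQ k) UNIV) = {e \<in> mcarrier E. snd e = mzero (M_omega1 k C)}"
  by (auto simp: ext_mod_simps M_omega1_zero_closed)

lemma section_fst_cocycle:
  assumes hom: "rmod_hom (KQ k) (M_omega1 k C) E s"
    and sec: "\<forall>X\<in>Mc. snd (s X) = X"
  shows "X \<in> Mc \<Longrightarrow> fst (s X) \<in> dsum_carrier k UNIV"
    and "X \<in> Mc \<Longrightarrow> Y \<in> Mc
      \<Longrightarrow> fst (s (madd (M_omega1 k C) X Y)) = fst (s X) + fst (s Y) + \<theta> (add_defect k C X Y)"
    and "X \<in> Mc \<Longrightarrow> r \<in> kq_carrier k
      \<Longrightarrow> fst (s (mact (M_omega1 k C) X r)) = dsum_act k (fst (s X)) r + \<theta> (act_defect k C X r)"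
    and "fst (s (mzero (M_omega1 k C))) = 0"
proof -
  have s_eq: "s X = (fst (s X), X)" and fst_in: "fst (s X) \<in> dsum_carrier k UNIV" if "X \<in> Mc" for X
  proof -
    have "s X \<in> dsum_carrier k UNIV \<times> Mc"
      using hom that unfolding rmod_hom_def ext_mod_simps by (simp add: Pi_iff)
    then show "s X = (fst (s X), X)" "fst (s X) \<in> dsum_carrier k UNIV"
      using sec that by (auto simp: mem_Times_iff prod_eq_iff)
  qed
  show "fst (s X) \<in> dsum_carrier k UNIV" if "X \<in> Mc" for X
    using fst_in[OF that] .
  show add: "fst (s (madd (M_omega1 k C) X Y)) = fst (s X) + fst (s Y) + \<theta> (add_defect k C X Y)"
    if "X \<in> Mc" "Y \<in> Mc" for X Y
  proof -
    have "s (madd (M_omega1 k C) X Y) = madd E (s X) (s Y)" using hom that unfolding rmod_hom_def by blast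
    then show ?thesis
      using s_eq[OF that(1)] s_eq[OF that(2)] s_eq[OF M_omega1_add_closed[OF that]]
      by (metis ext_mod_simps(2) fst_conv)
  qed
  show "fst (s (mact (M_omega1 k C) X r)) = dsum_act k (fst (s X)) r + \<theta> (act_defect k C X r)"
    if "X \<in> Mc" "r \<in> kq_carrier k" for X r
  proof -
    have "s (mact (M_omega1 k C) X r) = mact E (s X) r" using hom that unfolding rmod_hom_def by simp
    then show ?thesis
      using s_eq[OF that(1)] s_eq[OF M_omega1_act_closed[OF that]] by (metis ext_mod_simps(4) fst_conv)
  qed
  let ?O = "mzero (M_omega1 k C)"
  have O: "madd (M_omega1 k C) ?O ?O = ?O" by (rule M_omega1_zero_left[OF M_omega1_zero_closed])
  have D: "add_defect k C ?O ?O = 0" unfolding add_defect_def O lift_zero by simp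
  have "fst (s ?O) = fst (s ?O) + fst (s ?O)"
    using add[OF M_omega1_zero_closed M_omega1_zero_closed] unfolding O D theta_zero by simp
  then show "fst (s ?O) = 0" by simp
qed

text \<open>Writing a section as \<open>X \<mapsto> (w X, X)\<close>, the map \<open>x \<mapsto> \<theta> (x - lift (cls x)) - w (cls x)\<close>
  absorbs the cocycle and so is linear.\<close>

lemma theta_extension_of_section:
  assumes hom: "rmod_hom (KQ k) (M_omega1 k C) E s"
    and sec: "\<forall>X\<in>Mc. snd (s X) = X"
  shows "theta_extension k C \<theta> (\<lambda>x. \<theta> (x - lift k C (cls k C x)) - fst (s (cls k C x)))"
proof -
  define w where "w X = fst (s X)" for X
  note w_in = section_fst_cocycle(1)[OF hom sec, folded w_def]
    and w_add = section_fst_cocycle(2)[OF hom sec, folded w_def]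
    and w_act = section_fst_cocycle(3)[OF hom sec, folded w_def]
    and w_zero = section_fst_cocycle(4)[OF hom sec, folded w_def]
  let ?u = "\<lambda>x. \<theta> (x - lift k C (cls k C x)) - w (cls k C x)"
  have u_add: "?u (x + y) = ?u x + ?u y" if "cls k C x \<in> Mc" "cls k C y \<in> Mc" for x y
    using w_add[OF that]
    by (simp add: M_omega1_add_cls[symmetric] add_defect_def theta_diff theta_add algebra_simps)
  moreover have u_act: "?u (dsum_act k x r) = dsum_act k (?u x) r"
    if "cls k C x \<in> Mc" "r \<in> kq_carrier k" for x r
  proof -
    let ?X = "cls k C x" and ?Xr = "mact (M_omega1 k C) (cls k C x) r"
    have "?u (dsum_act k x r) = \<theta> (dsum_act k x r) - \<theta> (lift k C ?Xr)
        - (dsum_act k (w ?X) r + \<theta> (dsum_act k (lift k C ?X) r) - \<theta> (lift k C ?Xr))"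
      using w_act[OF that] that(2) by (simp add: M_omega1_act_cls act_defect_def theta_diff)
    also have "\<dots> = dsum_act k (\<theta> x) r - dsum_act k (\<theta> (lift k C ?X)) r - dsum_act k (w ?X) r"
      using that(2) by (simp add: theta_act algebra_simps)
    finally show ?thesis by (simp add: theta_diff dsum_act_diff_left)
  qed
  moreover have u_Isub: "?u x = \<theta> x" if "x \<in> Isub k C" for x
  proof -
    have "cls k C x = mzero (M_omega1 k C)" using that by (simp only: M_omega1_simps(3) cls_eq_zero_iff)
    then show ?thesis using w_zero by (simp add: lift_zero)
  qed
  moreover have u_in: "?u x \<in> dsum_carrier k UNIV" if "cls k C x \<in> Mc" for x
  proof -
    have "x - lift k C (cls k C x) \<in> Isub k C" by (simp add: cls_eq_iff[symmetric] cls_lift that)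
    then show ?thesis by (intro dsum_carrier_diff theta_Isub w_in that)
  qed
  ultimately have "theta_extension k C \<theta> ?u" unfolding theta_extension_def by blast
  then show ?thesis unfolding w_def .
qed

lemma Ext1_nonzero_if_no_theta_extension:
  assumes "\<And>u. \<not> theta_extension k C \<theta> u"
  shows "Ext1_nonzero (KQ k :: (nat \<times> nat \<Rightarrow> 'a) ring) (M_omega1 k C) (dsum (KQ k) (UNIV :: 'n set))"
proof -
  let ?f = "\<lambda>w. (w, mzero (M_omega1 k C))"
  have "\<not> (\<exists>s. rmod_hom (KQ k) (M_omega1 k C) E s \<and> (\<forall>X\<in>Mc. snd (s X) = X))"
    using theta_extension_of_section assms by blast
  moreover have "inj_on ?f (mcarrier (dsum (KQ k) UNIV))" by (simp add: inj_on_def)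
  ultimately have extension: "right_module (KQ k) E
    \<and> rmod_hom (KQ k) (dsum (KQ k) UNIV) E ?f \<and> inj_on ?f (mcarrier (dsum (KQ k) UNIV))
    \<and> rmod_hom (KQ k) E (M_omega1 k C) snd \<and> snd ` mcarrier E = Mc
    \<and> ?f ` mcarrier (dsum (KQ k) UNIV) = {e \<in> mcarrier E. snd e = mzero (M_omega1 k C)}
    \<and> \<not> (\<exists>s. rmod_hom (KQ k) (M_omega1 k C) E s \<and> (\<forall>X\<in>Mc. snd (s X) = X))"
    using ext_mod_right_module ext_mod_inclusion_hom ext_mod_projection_hom ext_mod_projection_surj
      ext_mod_projection_kernel by (intro conjI)
  show ?thesis unfolding Ext1_nonzero_def by (intro exI) (rule extension)
qed

end

section \<open>Ladder systems on \<open>\<omega>\<^sub>1\<close>\<close>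

lemma omega1_no_max:
  assumes "is_omega1 TYPE('o::wellorder)"
  shows "\<exists>y. (x::'o) < y"
proof (rule ccontr)
  assume "\<not> (\<exists>y. x < y)"
  then have "UNIV = insert x {y. y < x}"
    by (metis (mono_tags) UNIV_eq_I insert_iff mem_Collect_eq not_less_iff_gr_or_eq)
  moreover have "countable {y. y < x}" using assms by (simp add: is_omega1_def)
  ultimately have "countable (UNIV :: 'o set)" by (metis countable_insert)
  then show False using assms by (simp add: is_omega1_def)
qed

lemma not_is_lim_osucc:
  assumes "is_omega1 TYPE('o::wellorder)"
  shows "\<not> is_lim (osucc (x::'o))"
proof
  have "x < osucc x" using omega1_no_max[OF assms, of x] unfolding osucc_def by (metis LeastI)
  moreover assume "is_lim (osucc x)"
  ultimately obtain z where "x < z" "z < osucc x" unfolding is_lim_def by blast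
  then show False unfolding osucc_def by (metis Least_le not_le)
qed

lemma ladder_less:
  "ladder_system C \<Longrightarrow> is_lim \<alpha> \<Longrightarrow> C \<alpha> n < \<alpha>"
  unfolding ladder_system_def by blast

lemma ladder_not_is_lim:
  assumes "is_omega1 TYPE('o::wellorder)" "ladder_system (C :: 'o \<Rightarrow> nat \<Rightarrow> 'o)" "is_lim \<alpha>"
  shows "\<not> is_lim (C \<alpha> n)"
proof -
  obtain \<delta> where "C \<alpha> n = (osucc ^^ Suc n) \<delta>" using assms(2,3) unfolding ladder_system_def by blast
  then show ?thesis using not_is_lim_osucc[OF assms(1)] by simp
qed

lemma omega1_countable_bounded:
  assumes "is_omega1 TYPE('o::wellorder)" and "countable (X :: 'o set)"
  shows "\<exists>b. \<forall>x\<in>X. x < b"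
proof (rule ccontr)
  assume "\<not> (\<exists>b. \<forall>x\<in>X. x < b)"
  then have "UNIV \<subseteq> X \<union> (\<Union>x\<in>X. {y. y < x})" by (auto simp: not_less le_less)
  moreover have "countable (X \<union> (\<Union>x\<in>X. {y. y < x}))"
    using assms by (auto simp: is_omega1_def)
  ultimately have "countable (UNIV :: 'o set)" by (rule countable_subset)
  then show False using assms(1) by (simp add: is_omega1_def)
qed

lemma omega1_lim_sup:
  assumes om: "is_omega1 TYPE('o::wellorder)" and dlt: "\<And>n. (d :: nat \<Rightarrow> 'o) n < d (Suc n)"
  shows "\<exists>\<alpha>. is_lim \<alpha> \<and> (\<forall>n. d n < \<alpha>) \<and> (\<forall>y<\<alpha>. \<exists>n. y \<le> d n)"
proof -
  obtain b where "\<forall>x\<in>range d. x < b" using omega1_countable_bounded[OF om, of "range d"] by auto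
  then have exb: "\<exists>a. \<forall>n. d n < a" by auto
  define \<alpha> where "\<alpha> = (LEAST a. \<forall>n. d n < a)"
  have below: "\<forall>n. d n < \<alpha>" unfolding \<alpha>_def using exb by (rule LeastI_ex)
  have cofinal: "\<exists>n. y \<le> d n" if "y < \<alpha>" for y
  proof (rule ccontr)
    assume "\<not> (\<exists>n. y \<le> d n)"
    then have "\<alpha> \<le> y" unfolding \<alpha>_def by (auto simp: not_le intro: Least_le)
    then show False using that by simp
  qed
  have "is_lim \<alpha>"
    unfolding is_lim_def
  proof (intro conjI allI impI)
    show "\<exists>y. y < \<alpha>" using below by blast
    fix y assume "y < \<alpha>"
    then obtain n where "y \<le> d n" using cofinal by blast
    then show "\<exists>z. y < z \<and> z < \<alpha>" using dlt[of n] below by (intro exI[of _ "d (Suc n)"]) auto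
  qed
  then show ?thesis using below cofinal by blast
qed

text \<open>\<open>\<alpha>\<close> is the supremum of \<open>\<delta>\<^sub>0 < \<delta>\<^sub>1 < \<dots>\<close>, where \<open>\<delta>\<^sub>n\<^sub>+\<^sub>1\<close> bounds \<open>T \<gamma>\<close> for all \<open>\<gamma> < \<delta>\<^sub>n\<close>.\<close>

lemma omega1_lim_avoiding:
  assumes om: "is_omega1 TYPE('o::wellorder)" and T: "\<And>\<gamma>. countable (T \<gamma> :: 'o set)"
  shows "\<exists>\<alpha>::'o. is_lim \<alpha> \<and> (\<forall>\<gamma><\<alpha>. \<alpha> \<notin> T \<gamma>)"
proof -
  define bounds where "bounds \<delta> \<delta>' \<longleftrightarrow> \<delta> < \<delta>' \<and> (\<forall>\<gamma><\<delta>. \<forall>\<beta>\<in>T \<gamma>. \<beta> < (\<delta>'::'o))" for \<delta> \<delta>'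
  have "\<forall>\<delta>. \<exists>\<delta>'. bounds \<delta> \<delta>'"
  proof
    fix \<delta>
    have "countable (insert \<delta> (\<Union>\<gamma>\<in>{\<gamma>. \<gamma> < \<delta>}. T \<gamma>))"
      using om T by (auto simp: is_omega1_def)
    then obtain b where "\<forall>x\<in>insert \<delta> (\<Union>\<gamma>\<in>{\<gamma>. \<gamma> < \<delta>}. T \<gamma>). x < b"
      using omega1_countable_bounded[OF om] by blast
    then show "\<exists>\<delta>'. bounds \<delta> \<delta>'" unfolding bounds_def by blast
  qed
  then obtain nxt where nxt: "\<And>\<delta>. bounds \<delta> (nxt \<delta>)" using choice by blast
  define d where "d n = (nxt ^^ n) ozero" for n
  have dS: "d (Suc n) = nxt (d n)" for n by (simp add: d_def)
  have "d n < d (Suc n)" for n using nxt[of "d n"] by (simp add: dS bounds_def)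
  then obtain \<alpha> where lim: "is_lim \<alpha>" and below: "\<forall>n. d n < \<alpha>" and cofinal: "\<forall>y<\<alpha>. \<exists>n. y \<le> d n"
    using omega1_lim_sup[OF om] by blast
  have "\<alpha> \<notin> T \<gamma>" if \<gamma>: "\<gamma> < \<alpha>" for \<gamma>
  proof
    assume "\<alpha> \<in> T \<gamma>"
    obtain n where "\<gamma> \<le> d n" using cofinal \<gamma> by blast
    then have "\<gamma> < d (Suc n)" using \<open>d n < d (Suc n)\<close> by simp
    then have "\<alpha> < d (Suc (Suc n))" using nxt[of "d (Suc n)"] \<open>\<alpha> \<in> T \<gamma>\<close> by (auto simp: bounds_def dS)
    then show False using below by (metis less_asym)
  qed
  then show ?thesis using lim by blast
qed

unbundle cardinal_syntax

lemma infinite_times_nat_inj: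
  assumes inf: "infinite (UNIV :: 'a set)"
  shows "\<exists>h :: 'a \<times> nat \<Rightarrow> 'a. inj h"
proof -
  obtain g :: "nat \<Rightarrow> 'a" where "inj g" using infinite_countable_subset[OF inf] by blast
  then have "|UNIV :: nat set| \<le>o |UNIV :: 'a set|"
    unfolding card_of_ordLeq[symmetric] by blast
  then have "|(UNIV :: 'a set) \<times> (UNIV :: nat set)| \<le>o |UNIV :: 'a set|"
    using card_of_Times_infinite[OF inf] ordIso_iff_ordLeq by blast
  then obtain f :: "'a \<times> nat \<Rightarrow> 'a" where "inj_on f (UNIV \<times> UNIV)"
    unfolding card_of_ordLeq[symmetric] by blast
  then show ?thesis by auto
qed

text \<open>The partial sums \<open>-\<Sum>\<^sub>j\<^sub>\<le>\<^sub>m c\<^sup>m\<^sup>-\<^sup>j x\<^sub>\<alpha>\<^sub>,\<^sub>j\<close> telescope on the relations, so that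
  \<open>\<theta>\<close> sends \<open>relgen k C \<alpha> m\<close> to the unit vector at \<open>h (\<alpha>, m)\<close>.\<close>

definition ladder_theta :: "nat \<Rightarrow> ('o::wellorder \<times> nat \<Rightarrow> 'o)
    \<Rightarrow> ('o \<times> nat \<Rightarrow> nat \<times> nat \<Rightarrow> 'a::field) \<Rightarrow> ('o \<Rightarrow> nat \<times> nat \<Rightarrow> 'a)" where
  "ladder_theta k h x = (\<lambda>q. if q \<in> range h then (case inv_into UNIV h q of (\<alpha>, m) \<Rightarrow>
      if is_lim \<alpha> then - (\<Sum>j\<le>m. kq_mult k (cycle_pow k (m - j)) (x (\<alpha>, j))) else 0) else 0)"

lemma ladder_theta_add: "ladder_theta k h (x + y) = ladder_theta k h x + ladder_theta k h y"
  by (auto simp: ladder_theta_def fun_eq_iff kq_mult_add_right sum.distrib split: prod.split)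

lemma ladder_theta_act: "ladder_theta k h (dsum_act k x r) = dsum_act k (ladder_theta k h x) r"
  by (auto simp: ladder_theta_def fun_eq_iff dsum_act_def kq_mult_minus_left kq_mult_sum_left
      kq_mult_assoc split: prod.split)

lemma ladder_theta_at:
  "inj h \<Longrightarrow> ladder_theta k h x (h (\<alpha>, m))
    = (if is_lim \<alpha> then - (\<Sum>j\<le>m. kq_mult k (cycle_pow k (m - j)) (x (\<alpha>, j))) else 0)"
  by (simp add: ladder_theta_def)

lemma relgen_at_lim:
  fixes C :: "'o::wellorder \<Rightarrow> nat \<Rightarrow> 'o"
  assumes "\<not> is_lim (C \<alpha> n)" "is_lim \<beta>"
  shows "(relgen k C \<alpha> n (\<beta>, j) :: nat \<times> nat \<Rightarrow> 'a::field)
    = (if \<beta> = \<alpha> \<and> j = n then - cycle_pow k 0 else 0) + (if \<beta> = \<alpha> \<and> j = Suc n then cycle_pow k 1 else 0)"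
proof -
  have "(\<beta>, j) \<noteq> (C \<alpha> n, 0)" using assms by auto
  then have "unitv (C \<alpha> n, 0) (pth 0 0) (\<beta>, j) = (0 :: nat \<times> nat \<Rightarrow> 'a)"
    unfolding unitv_def by (simp only: if_False)
  moreover have "kq_mult k (pth 0 0) (pth 0 (Suc k)) = (cycle_pow k 1 :: nat \<times> nat \<Rightarrow> 'a)"
    using cycle_pow_mult[of k 0 1] by (simp add: cycle_pow_def)
  then have "kq_mult k (unitv (\<alpha>, Suc n) (pth 0 0) (\<beta>, j)) (pth 0 (Suc k))
      = (if \<beta> = \<alpha> \<and> j = Suc n then cycle_pow k 1 else (0 :: nat \<times> nat \<Rightarrow> 'a))"
    by (simp add: unitv_def)
  moreover have "unitv (\<alpha>, n) (pth 0 0) (\<beta>, j) = (if \<beta> = \<alpha> \<and> j = n then cycle_pow k 0 else (0 :: nat \<times> nat \<Rightarrow> 'a))"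
    by (simp add: unitv_def cycle_pow_0)
  ultimately show ?thesis by (simp add: relgen_def dsum_act_def)
qed

lemma ladder_sum_relgen:
  fixes C :: "'o::wellorder \<Rightarrow> nat \<Rightarrow> 'o"
  assumes "\<not> is_lim (C \<alpha> n)" "is_lim \<beta>"
  shows "(\<Sum>j\<le>m. kq_mult k (cycle_pow k (m - j)) (relgen k C \<alpha> n (\<beta>, j)))
    = (if \<beta> = \<alpha> \<and> m = n then - cycle_pow k 0 else (0 :: nat \<times> nat \<Rightarrow> 'a::field))"
proof -
  have "(\<Sum>j\<le>m. kq_mult k (cycle_pow k (m - j)) (relgen k C \<alpha> n (\<beta>, j)))
      = (\<Sum>j\<le>m. (if j = n then (if \<beta> = \<alpha> then - cycle_pow k (m - n) else 0) else 0)
        + (if j = Suc n then (if \<beta> = \<alpha> then cycle_pow k (m - Suc n + 1) else 0) else (0 :: nat \<times> nat \<Rightarrow> 'a)))"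
    by (rule sum.cong[OF refl])
      (simp add: relgen_at_lim[where C = C and \<alpha> = \<alpha> and n = n, OF assms] kq_mult_add_right
        kq_mult_minus_right cycle_pow_mult)
  also have "\<dots> = (if n \<le> m then (if \<beta> = \<alpha> then - cycle_pow k (m - n) else 0) else 0)
      + (if Suc n \<le> m then (if \<beta> = \<alpha> then cycle_pow k (m - Suc n + 1) else 0) else 0)"
    by (simp only: sum.distrib sum.delta finite_atMost atMost_iff)
  also have "\<dots> = (if \<beta> = \<alpha> \<and> m = n then - cycle_pow k 0 else 0)"
    by (cases "n < m") (auto simp: Suc_diff_Suc)
  finally show ?thesis .
qed

lemma ladder_theta_relgen:
  fixes C :: "'o::wellorder \<Rightarrow> nat \<Rightarrow> 'o"
  assumes "inj h" "\<not> is_lim (C \<alpha> n)" "is_lim \<alpha>"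
  shows "(ladder_theta k h (relgen k C \<alpha> n) :: 'o \<Rightarrow> nat \<times> nat \<Rightarrow> 'a::field) = unitv (h (\<alpha>, n)) (pth 0 0)"
proof
  fix q
  show "ladder_theta k h (relgen k C \<alpha> n) q = unitv (h (\<alpha>, n)) (pth 0 0) q"
  proof (cases "q \<in> range h")
    case True
    then obtain \<beta> m where q: "q = h (\<beta>, m)" by auto
    have "h (\<beta>, m) = h (\<alpha>, n) \<longleftrightarrow> \<beta> = \<alpha> \<and> m = n" using assms(1) by (auto dest: injD)
    then show ?thesis
      using assms(3)
      by (auto simp: q ladder_theta_at[OF assms(1)] ladder_sum_relgen[where C = C and \<alpha> = \<alpha> and n = n, OF assms(2)] unitv_def cycle_pow_0)
  qed (auto simp: ladder_theta_def unitv_def)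
qed

lemma ladder_theta_Isub:
  assumes "inj h" "is_omega1 TYPE('o::wellorder)" "ladder_system (C :: 'o \<Rightarrow> nat \<Rightarrow> 'o)"
    and "x \<in> Isub k C"
  shows "(ladder_theta k h x :: 'o \<Rightarrow> nat \<times> nat \<Rightarrow> 'a::field) \<in> dsum_carrier k UNIV"
  using assms(4)
proof (induct rule: Isub_induct)
  case (base \<alpha> n)
    have "(ladder_theta k h (relgen k C \<alpha> n) :: 'o \<Rightarrow> nat \<times> nat \<Rightarrow> 'a) = unitv (h (\<alpha>, n)) (pth 0 0)"
      using ladder_not_is_lim[OF assms(2,3) base]
      by (rule ladder_theta_relgen[where C = C and \<alpha> = \<alpha> and n = n, OF assms(1) _ base])
    then show ?case by (simp add: dsum_carrier_unitv pth_in_carrier)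
next
  case zero
  have "ladder_theta k h 0 = 0" using ladder_theta_add[of k h 0 0] by simp
  then show ?case by (metis dsum_carrier_zero)
next
  case (add x y)
  then show ?case by (metis ladder_theta_add dsum_carrier_add)
next
  case (act x r)
  then show ?case by (metis ladder_theta_act dsum_carrier_act)
qed

lemma ladder_theta_pushout:
  assumes "inj h" "is_omega1 TYPE('o::wellorder)" "ladder_system (C :: 'o \<Rightarrow> nat \<Rightarrow> 'o)"
  shows "theta_pushout k C (ladder_theta k h :: _ \<Rightarrow> 'o \<Rightarrow> nat \<times> nat \<Rightarrow> 'a::field)"
  by unfold_locales (simp_all add: ladder_theta_add ladder_theta_act ladder_theta_Isub[OF assms])

section \<open>No extension of \<open>\<theta>\<close>\<close>

lemma cls_unitv_in_M_omega1:
  "cls k C (unitv (\<gamma>, 0) (pth 0 0)) \<in> mcarrier (M_omega1 k C)"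
  "is_lim \<alpha> \<Longrightarrow> cls k C (unitv (\<alpha>, m) (pth 0 0)) \<in> mcarrier (M_omega1 k C)"
  by (rule cls_in_M_omega1, cases "is_lim \<gamma>"; auto simp: Mgens_def)+

lemma theta_extension_ladder_recursion:
  fixes C :: "'o::wellorder \<Rightarrow> nat \<Rightarrow> 'o" and u :: "_ \<Rightarrow> 'o \<Rightarrow> nat \<times> nat \<Rightarrow> 'a::field"
  assumes ext: "theta_extension k C (ladder_theta k h) u"
    and "inj h" "is_omega1 TYPE('o)" "ladder_system C" "is_lim \<alpha>"
  shows "u (unitv (\<alpha>, m) (pth 0 0)) = u (unitv (C \<alpha> m, 0) (pth 0 0))
    + dsum_act k (u (unitv (\<alpha>, Suc m) (pth 0 0))) (cycle_pow k 1) - unitv (h (\<alpha>, m)) (pth 0 0)"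
proof -
  let ?r = "relgen k C \<alpha> m" and ?E = "\<lambda>m. unitv (\<alpha>, m) (pth 0 0)" and ?G = "unitv (C \<alpha> m, 0) (pth 0 0)"
  note u_add = theta_extensionD(1)[OF ext] and u_act = theta_extensionD(2)[OF ext]
    and u_Isub = theta_extensionD(3)[OF ext]
  have c1: "cycle_pow k 1 \<in> kq_carrier k" unfolding cycle_pow_def by (rule pth_in_carrier) simp
  have rI: "?r \<in> Isub k C" by (rule relgen_in_Isub[OF assms(5)])
  then have "cls k C ?r = mzero (M_omega1 k C)" by (simp only: M_omega1_simps(3) cls_eq_zero_iff)
  then have rM: "cls k C ?r \<in> mcarrier (M_omega1 k C)" by (metis M_omega1_zero_closed)
  have EM: "cls k C (?E m) \<in> mcarrier (M_omega1 k C)" for m by (rule cls_unitv_in_M_omega1(2)[OF assms(5)])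
  have actM: "cls k C (dsum_act k (?E (Suc m)) (cycle_pow k 1)) \<in> mcarrier (M_omega1 k C)"
    using M_omega1_act_closed[OF EM[of "Suc m"] c1] unfolding M_omega1_act_cls[OF c1] .
  have "?r + ?E m = ?G + dsum_act k (?E (Suc m)) (cycle_pow k 1)"
    unfolding relgen_def cycle_pow_1 by simp
  then have "u ?r + u (?E m) = u ?G + dsum_act k (u (?E (Suc m))) (cycle_pow k 1)"
    by (metis u_add[OF rM EM] u_add[OF cls_unitv_in_M_omega1(1) actM] u_act[OF EM c1])
  moreover have "u ?r = unitv (h (\<alpha>, m)) (pth 0 0)"
    using u_Isub[OF rI] ladder_theta_relgen[where C = C and \<alpha> = \<alpha> and n = m, OF assms(2)
        ladder_not_is_lim[OF assms(3,4,5)] assms(5)]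
    by simp
  ultimately show ?thesis by (simp add: algebra_simps)
qed

lemma no_ladder_theta_extension:
  fixes C :: "'o::wellorder \<Rightarrow> nat \<Rightarrow> 'o" and u :: "_ \<Rightarrow> 'o \<Rightarrow> nat \<times> nat \<Rightarrow> 'a::field"
  assumes hinj: "inj h" and om: "is_omega1 TYPE('o)" and lad: "ladder_system C"
  shows "\<not> theta_extension k C (ladder_theta k h) u"
proof
  assume ext: "theta_extension k C (ladder_theta k h) u"
  have fin_supp: "finite {q. u x q \<noteq> 0}" if "cls k C x \<in> mcarrier (M_omega1 k C)" for x
    using theta_extensionD(4)[OF ext that] by (simp add: dsum_carrier_def)
  define T where "T \<gamma> = {\<beta>. \<exists>j. u (unitv (\<gamma>, 0) (pth 0 0)) (h (\<beta>, j)) \<noteq> 0}" for \<gamma>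
  have "countable (T \<gamma>)" for \<gamma>
  proof -
    have "finite (h -` {q. u (unitv (\<gamma>, 0) (pth 0 0)) q \<noteq> 0})"
      using fin_supp[OF cls_unitv_in_M_omega1(1)] hinj by (rule finite_vimageI)
    moreover have "T \<gamma> = fst ` (h -` {q. u (unitv (\<gamma>, 0) (pth 0 0)) q \<noteq> 0})"
      unfolding T_def by force
    ultimately show ?thesis by (simp add: countable_finite)
  qed
  then obtain \<alpha> where lim: "is_lim \<alpha>" and notT: "\<forall>\<gamma><\<alpha>. \<alpha> \<notin> T \<gamma>"
    using omega1_lim_avoiding[OF om] by blast
  have "finite ((\<lambda>j. h (\<alpha>, j)) -` {q. u (unitv (\<alpha>, 0) (pth 0 0)) q \<noteq> 0})"
    using fin_supp[OF cls_unitv_in_M_omega1(2)[OF lim]] hinj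
    by (intro finite_vimageI) (auto simp: inj_def)
  then obtain j where j: "u (unitv (\<alpha>, 0) (pth 0 0)) (h (\<alpha>, j)) = 0"
    using ex_new_if_finite[OF infinite_UNIV_nat] by blast
  define a where "a m = u (unitv (\<alpha>, m) (pth 0 0)) (h (\<alpha>, j))" for m
  show False
  proof (rule no_cycle_recursion[of a k j])
    show "a 0 = 0" unfolding a_def by (rule j)
    fix m
    have "u (unitv (C \<alpha> m, 0) (pth 0 0)) (h (\<alpha>, j)) = 0"
      using notT ladder_less[OF lad lim, of m] unfolding T_def by blast
    moreover have "unitv (h (\<alpha>, m)) (pth 0 0) (h (\<alpha>, j)) = (if m = j then cycle_pow k 0 else 0)"
      by (simp add: unitv_def cycle_pow_0 inj_eq[OF hinj])
    ultimately show "a m = kq_mult k (a (Suc m)) (cycle_pow k 1) - (if m = j then cycle_pow k 0 else 0)"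
      unfolding a_def by (simp add: theta_extension_ladder_recursion[OF ext hinj om lad lim, where m = m] dsum_act_def)
  qed
qed

theorem claim2p7:
  fixes k :: nat and C :: "'o::wellorder \<Rightarrow> nat \<Rightarrow> 'o"
  assumes "alg_closed TYPE('a::field)"
    and "is_omega1 TYPE('o)"
    and "ladder_system C"
  shows "Ext1_nonzero (KQ k :: (nat \<times> nat \<Rightarrow> 'a) ring) (M_omega1 k C)
           (dsum (KQ k) (UNIV :: 'o set))"
proof -
  have "infinite (UNIV :: 'o set)"
    using assms(2) countable_finite by (auto simp: is_omega1_def)
  then obtain h :: "'o \<times> nat \<Rightarrow> 'o" where h: "inj h" using infinite_times_nat_inj by blast
  interpret theta_pushout k C "ladder_theta k h :: _ \<Rightarrow> 'o \<Rightarrow> nat \<times> nat \<Rightarrow> 'a"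
    by (rule ladder_theta_pushout[OF h assms(2,3)])
  show ?thesis
    using no_ladder_theta_extension[OF h assms(2,3)] by (rule Ext1_nonzero_if_no_theta_extension)
qed

end
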